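(* Assume the standing setup below. Then for every phase change number $s_i$ of $X$ with $i\ge 1$, the function $\pi_0V_{s_i}(X)\to\pi_0V_{s_i}(Y)$, $[x]_{s_i,X}\mapsto[x]_{s_i,Y}$, induced by the inclusion $X\subseteq Y$, is a bijection.
   Context: For a finite set $Z\subset\mathbb{R}^n$ and a real number $s\ge 0$, the Vietoris–Rips complex $V_s(Z)$ is the simplicial complex with vertex set $Z$ whose simplices are the nonempty subsets $\sigma\subseteq Z$ with $d(z,z')\le s$ for all $z,z'\in\sigma$ ($d$ the Euclidean distance). For $z\in Z$, $[z]_{s,Z}\subseteq Z$ denotes the set of vertices of the path component of $V_s(Z)$ containing $z$, and $\pi_0V_s(Z)$ is the set of path components. Standing setup: $X\subset\mathbb{R}^n$ is a finite set with at least two points, $y\in\mathbb{R}^n\setminus X$, $Y=X\sqcup\{y\}$. The phase change numbers of $X$ are the distinct values $0=s_0<s_1<\dots<s_k$ of $d(x,x')$ for $x,x'\in X$. There are $x_0\in X$ and a real $r>0$ with $d(y,x_0)<r$ and $r<s_{i+1}-s_i$ for all $0\le i<k$. *)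

theory Defs
  imports "HOL-Analysis.Analysis"
begin

definition VR :: "real \<Rightarrow> 'a::metric_space set \<Rightarrow> 'a set set" where
  "VR s Z = {\<sigma>. \<sigma> \<noteq> {} \<and> \<sigma> \<subseteq> Z \<and> (\<forall>z\<in>\<sigma>. \<forall>z'\<in>\<sigma>. dist z z' \<le> s)}"

definition VR_edge :: "real \<Rightarrow> 'a::metric_space set \<Rightarrow> ('a \<times> 'a) set" where
  "VR_edge s Z = {(z, z'). {z, z'} \<in> VR s Z}"

text \<open>Vertex set of the path component of V_s(Z) containing z, i.e. [z]_{s,Z}:
  vertices reachable from z by an edge path in the complex.\<close>
definition VR_comp :: "real \<Rightarrow> 'a::metric_space set \<Rightarrow> 'a \<Rightarrow> 'a set" where
  "VR_comp s Z z = {z'. (z, z') \<in> (VR_edge s Z)\<^sup>*}"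

text \<open>pi_0 V_s(Z), components represented by their vertex sets.\<close>
definition VR_pi0 :: "real \<Rightarrow> 'a::metric_space set \<Rightarrow> 'a set set" where
  "VR_pi0 s Z = VR_comp s Z ` Z"

definition phase_changes :: "'a::metric_space set \<Rightarrow> real list" where
  "phase_changes X = sorted_list_of_set {dist x x' | x x'. x \<in> X \<and> x' \<in> X}"

end

theory Submission
  imports Defs
begin

text \<open>Collapsing the new point y onto x0 maps edges of V_s(X \<union> {y}) to edges or loops of
  V_s(X) as soon as every neighbour of y in X is also a neighbour of x0. This retraction fixes X,
  so connectivity between points of X is the same in both complexes, and y itself lies in the
  component of x0. The gap condition on the phase change numbers supplies the neighbour condition:
  by the triangle inequality, a neighbour of y is within s_i + r of x0, and no distance of X lies
  in the open interval (s_i, s_i + r).\<close>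

lemma VR_edge_iff:
  assumes "s \<ge> 0"
  shows "(a, b) \<in> VR_edge s Z \<longleftrightarrow> a \<in> Z \<and> b \<in> Z \<and> dist a b \<le> s"
  using assms unfolding VR_edge_def VR_def by (auto simp: dist_commute)

lemma sym_VR_edge: "sym (VR_edge s Z)"
  unfolding VR_edge_def by (auto intro: symI simp: insert_commute)

lemma VR_edge_mono: "Z \<subseteq> Z' \<Longrightarrow> VR_edge s Z \<subseteq> VR_edge s Z'"
  unfolding VR_edge_def VR_def by auto

lemma VR_comp_eq_iff: "VR_comp s Z a = VR_comp s Z b \<longleftrightarrow> (a, b) \<in> (VR_edge s Z)\<^sup>*"
proof
  assume "VR_comp s Z a = VR_comp s Z b"
  moreover have "b \<in> VR_comp s Z b" unfolding VR_comp_def by simp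
  ultimately show "(a, b) \<in> (VR_edge s Z)\<^sup>*" unfolding VR_comp_def by auto
next
  assume ab: "(a, b) \<in> (VR_edge s Z)\<^sup>*"
  then have "(b, a) \<in> (VR_edge s Z)\<^sup>*"
    using sym_rtrancl[OF sym_VR_edge] by (auto dest: symD)
  with ab show "VR_comp s Z a = VR_comp s Z b"
    unfolding VR_comp_def by (auto intro: rtrancl_trans)
qed

lemma rtrancl_VR_edge_mono: "Z \<subseteq> Z' \<Longrightarrow> (VR_edge s Z)\<^sup>* \<subseteq> (VR_edge s Z')\<^sup>*"
  by (intro rtrancl_mono VR_edge_mono)

lemma VR_comp_eq_mono:
  "Z \<subseteq> Z' \<Longrightarrow> VR_comp s Z a = VR_comp s Z b \<Longrightarrow> VR_comp s Z' a = VR_comp s Z' b"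
  unfolding VR_comp_eq_iff using rtrancl_VR_edge_mono by blast

lemma VR_edge_insert_retract:
  fixes X :: "'a::metric_space set"
  assumes "s \<ge> 0" and "x0 \<in> X"
    and nbrs: "\<And>a. a \<in> X \<Longrightarrow> dist y a \<le> s \<Longrightarrow> dist x0 a \<le> s"
    and edge: "(a, b) \<in> VR_edge s (insert y X)"
  defines "g \<equiv> \<lambda>z. if z = y then x0 else z"
  shows "(g a, g b) \<in> (VR_edge s X)\<^sup>="
proof -
  have ab: "a \<in> insert y X" "b \<in> insert y X" "dist a b \<le> s"
    using edge VR_edge_iff[OF \<open>s \<ge> 0\<close>, of a b "insert y X"] by simp_all
  have "g a \<in> X" "g b \<in> X"
    using ab(1,2) \<open>x0 \<in> X\<close> unfolding g_def by auto
  moreover have "dist (g a) (g b) \<le> s"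
  proof (cases "a = y"; cases "b = y")
    assume "a = y" "b \<noteq> y"
    then show ?thesis using ab nbrs[of b] unfolding g_def by simp
  next
    assume "a \<noteq> y" "b = y"
    then show ?thesis using ab nbrs[of a] unfolding g_def by (simp add: dist_commute)
  qed (use ab \<open>s \<ge> 0\<close> in \<open>simp_all add: g_def\<close>)
  ultimately show ?thesis
    using VR_edge_iff[OF \<open>s \<ge> 0\<close>] by blast
qed

lemma rtrancl_VR_edge_insert_iff:
  fixes X :: "'a::metric_space set"
  assumes "s \<ge> 0" and "x0 \<in> X" and "y \<notin> X"
    and nbrs: "\<And>a. a \<in> X \<Longrightarrow> dist y a \<le> s \<Longrightarrow> dist x0 a \<le> s"
    and "a \<in> X" and "b \<in> X"
  shows "(a, b) \<in> (VR_edge s (insert y X))\<^sup>* \<longleftrightarrow> (a, b) \<in> (VR_edge s X)\<^sup>*"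
proof
  define g where "g z = (if z = y then x0 else z)" for z
  assume "(a, b) \<in> (VR_edge s (insert y X))\<^sup>*"
  then have "(g a, g b) \<in> (VR_edge s X)\<^sup>*"
  proof (induction rule: rtrancl_induct)
    case (step b c)
    have "(g b, g c) \<in> (VR_edge s X)\<^sup>="
      using VR_edge_insert_retract[OF assms(1,2) nbrs step(2)] unfolding g_def by simp
    with step(3) show ?case by (auto intro: rtrancl_into_rtrancl)
  qed simp
  moreover have "a \<noteq> y" "b \<noteq> y"
    using \<open>a \<in> X\<close> \<open>b \<in> X\<close> \<open>y \<notin> X\<close> by auto
  ultimately show "(a, b) \<in> (VR_edge s X)\<^sup>*"
    unfolding g_def by simp
next
  show "(a, b) \<in> (VR_edge s X)\<^sup>* \<Longrightarrow> (a, b) \<in> (VR_edge s (insert y X))\<^sup>*"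
    using rtrancl_VR_edge_mono[OF subset_insertI] by blast
qed

lemma VR_comp_SOME:
  assumes "Z \<subseteq> Z'"
  shows "VR_comp s Z' (SOME x. x \<in> VR_comp s Z z) = VR_comp s Z' z"
proof -
  have "z \<in> VR_comp s Z z" unfolding VR_comp_def by simp
  then have "(SOME x. x \<in> VR_comp s Z z) \<in> VR_comp s Z z" by (rule someI)
  then have "(z, SOME x. x \<in> VR_comp s Z z) \<in> (VR_edge s Z')\<^sup>*"
    using rtrancl_VR_edge_mono[OF assms] unfolding VR_comp_def by blast
  then show ?thesis
    by (metis VR_comp_eq_iff)
qed

lemma bij_betw_VR_pi0_insert:
  fixes X :: "'a::metric_space set"
  assumes "s \<ge> 0" and "x0 \<in> X" and "y \<notin> X" and "dist y x0 \<le> s"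
    and nbrs: "\<And>a. a \<in> X \<Longrightarrow> dist y a \<le> s \<Longrightarrow> dist x0 a \<le> s"
  shows "bij_betw (\<lambda>C. VR_comp s (insert y X) (SOME x. x \<in> C))
           (VR_pi0 s X) (VR_pi0 s (insert y X))"
proof -
  let ?F = "\<lambda>C. VR_comp s (insert y X) (SOME x. x \<in> C)"
  have F: "?F (VR_comp s X z) = VR_comp s (insert y X) z" for z
    by (rule VR_comp_SOME) auto
  have "inj_on ?F (VR_pi0 s X)"
  proof (rule inj_onI)
    fix C C' assume "C \<in> VR_pi0 s X" "C' \<in> VR_pi0 s X" and eq: "?F C = ?F C'"
    then obtain a b where ab: "a \<in> X" "b \<in> X" "C = VR_comp s X a" "C' = VR_comp s X b"
      unfolding VR_pi0_def by blast
    with eq have "(a, b) \<in> (VR_edge s (insert y X))\<^sup>*"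
      by (simp add: F VR_comp_eq_iff)
    then show "C = C'"
      using rtrancl_VR_edge_insert_iff[OF assms(1-3) nbrs ab(1,2)] ab(3,4)
      by (simp add: VR_comp_eq_iff)
  qed
  moreover have "VR_comp s (insert y X) y = VR_comp s (insert y X) x0"
    unfolding VR_comp_eq_iff using VR_edge_iff[OF \<open>s \<ge> 0\<close>] assms(2,4) by blast
  then have "VR_comp s (insert y X) ` insert y X = VR_comp s (insert y X) ` X"
    using \<open>x0 \<in> X\<close> by (simp add: insert_absorb)
  then have "?F ` VR_pi0 s X = VR_pi0 s (insert y X)"
    unfolding VR_pi0_def image_image F by simp
  ultimately show ?thesis
    unfolding bij_betw_def by blast
qed

lemma set_phase_changes:
  assumes "finite X"
  shows "set (phase_changes X) = {dist x x' | x x'. x \<in> X \<and> x' \<in> X}"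
proof -
  have "{dist x x' | x x'. x \<in> X \<and> x' \<in> X} = (\<lambda>(x, x'). dist x x') ` (X \<times> X)"
    by auto
  then show ?thesis
    unfolding phase_changes_def using assms by simp
qed

lemma phase_change_gt_gap:
  assumes "finite X"
    and gap: "\<And>j. j + 1 < length (phase_changes X) \<Longrightarrow>
                r < phase_changes X ! (j + 1) - phase_changes X ! j"
    and "1 \<le> i" and "i < length (phase_changes X)"
  shows "r < phase_changes X ! i"
proof -
  let ?L = "phase_changes X"
  have "?L ! 0 \<in> set ?L"
    using assms(4) by (intro nth_mem) linarith
  then have "0 \<le> ?L ! 0"
    using set_phase_changes[OF \<open>finite X\<close>] by auto
  moreover have "?L ! 1 \<le> ?L ! i"
    using sorted_nth_mono[of ?L 1 i] assms(3,4) unfolding phase_changes_def by simp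
  ultimately show ?thesis
    using gap[of 0] assms(3,4) by simp
qed

lemma dist_le_phase_change:
  assumes "finite X"
    and gap: "\<And>j. j + 1 < length (phase_changes X) \<Longrightarrow>
                r < phase_changes X ! (j + 1) - phase_changes X ! j"
    and "i < length (phase_changes X)"
    and "a \<in> X" and "b \<in> X" and "dist a b < phase_changes X ! i + r"
  shows "dist a b \<le> phase_changes X ! i"
proof -
  let ?L = "phase_changes X"
  have sorted: "sorted ?L" unfolding phase_changes_def by simp
  have "dist a b \<in> set ?L"
    using set_phase_changes[OF \<open>finite X\<close>] assms(4,5) by auto
  then obtain j where j: "j < length ?L" "?L ! j = dist a b"
    by (auto simp: in_set_conv_nth)
  show ?thesis
  proof (cases "j \<le> i")
    case True
    then show ?thesis using sorted_nth_mono[OF sorted True assms(3)] j by simp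
  next
    case False
    then have "?L ! (i + 1) \<le> ?L ! j" using sorted_nth_mono[OF sorted _ j(1)] by simp
    then show ?thesis using gap[of i] False j assms(6) by simp
  qed
qed

theorem corollary12:
  fixes X :: "(real ^ 'n) set" and y x0 :: "real ^ 'n" and r :: real
  assumes "finite X" and "card X \<ge> 2"
    and "y \<notin> X"
    and "x0 \<in> X" and "r > 0" and "dist y x0 < r"
    and "\<forall>i. i + 1 < length (phase_changes X) \<longrightarrow>
           r < phase_changes X ! (i + 1) - phase_changes X ! i"
    and "1 \<le> i" and "i < length (phase_changes X)"
  shows "(\<forall>x\<in>X. \<forall>x'\<in>X.
            VR_comp (phase_changes X ! i) X x = VR_comp (phase_changes X ! i) X x' \<longrightarrow>
            VR_comp (phase_changes X ! i) (insert y X) x = VR_comp (phase_changes X ! i) (insert y X) x')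
      \<and> bij_betw (\<lambda>C. VR_comp (phase_changes X ! i) (insert y X) (SOME x. x \<in> C))
           (VR_pi0 (phase_changes X ! i) X) (VR_pi0 (phase_changes X ! i) (insert y X))"
proof -
  define s where "s = phase_changes X ! i"
  have gap: "\<And>j. j + 1 < length (phase_changes X) \<Longrightarrow>
               r < phase_changes X ! (j + 1) - phase_changes X ! j"
    using assms(7) by blast
  have "r < s"
    unfolding s_def using phase_change_gt_gap[OF \<open>finite X\<close> gap assms(8,9)] .
  have nbrs: "dist x0 a \<le> s" if "a \<in> X" "dist y a \<le> s" for a
  proof -
    have "dist x0 a \<le> dist x0 y + dist y a" by (rule dist_triangle)
    then have "dist x0 a < s + r" using assms(6) that(2) by (simp add: dist_commute)
    then show ?thesis
      unfolding s_def using dist_le_phase_change[OF \<open>finite X\<close> gap assms(9,4) that(1)] by blast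
  qed
  have "0 \<le> s" "dist y x0 \<le> s"
    using \<open>r < s\<close> assms(5,6) by simp_all
  then show ?thesis
    unfolding s_def[symmetric]
    using VR_comp_eq_mono[OF subset_insertI, of s X]
      bij_betw_VR_pi0_insert[OF _ assms(4,3) _ nbrs] by blast
qed

end
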